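(* Let $A$ be a commutative unital C*-algebra, let $\theta : A \to M_n(\mathbb{C})$ be a continuous unital homomorphism, and let $\alpha : A \to A$ be a unital antilinear contraction. Define $$\theta_\alpha(f) := \tfrac12\bigl(\theta(f)+\theta(\alpha(f))^*\bigr)\quad (f\in A).$$ If $\|\theta_\alpha\|\le 1$, then $\theta$ is a $*$-homomorphism, and in particular $\|\theta\|=1$.
   Context: $M_n(\mathbb{C})$ carries the operator norm. A map $\alpha$ is antilinear if $\alpha(\lambda f+g)=\overline\lambda\alpha(f)+\alpha(g)$. It is a contraction if $\|\alpha(f)\|\le\|f\|$, and it is unital if $\alpha(1)=1$. *)

theory Defs
  imports "HOL-Analysis.Analysis"
begin

text \<open>A commutative unital C*-algebra: a commutative unital real Banach algebra
(type class) together with a complex scalar multiplication sm extending the real one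
and an involution st satisfying the C*-identity.\<close>

definition comm_unital_cstar ::
  "(complex \<Rightarrow> 'a::{real_normed_algebra_1,comm_ring_1,banach} \<Rightarrow> 'a) \<Rightarrow> ('a \<Rightarrow> 'a) \<Rightarrow> bool" where
  "comm_unital_cstar sm st \<longleftrightarrow>
     (\<forall>x. sm 1 x = x) \<and>
     (\<forall>a b x. sm (a * b) x = sm a (sm b x)) \<and>
     (\<forall>a x y. sm a (x + y) = sm a x + sm a y) \<and>
     (\<forall>a b x. sm (a + b) x = sm a x + sm b x) \<and>
     (\<forall>r x. sm (complex_of_real r) x = r *\<^sub>R x) \<and>
     (\<forall>a x y. sm a (x * y) = sm a x * y) \<and>
     (\<forall>a x. norm (sm a x) = cmod a * norm x) \<and>
     (\<forall>x y. st (x + y) = st x + st y) \<and>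
     (\<forall>a x. st (sm a x) = sm (cnj a) (st x)) \<and>
     (\<forall>x. st (st x) = x) \<and>
     (\<forall>x y. st (x * y) = st y * st x) \<and>
     (\<forall>x. norm (st x * x) = (norm x)\<^sup>2)"

definition mscale :: "complex \<Rightarrow> complex^'n^'m \<Rightarrow> complex^'n^'m" where
  "mscale c M = (\<chi> i j. c * M$i$j)"

definition adj :: "complex^'n^'m \<Rightarrow> complex^'m^'n" where
  "adj M = (\<chi> i j. cnj (M$j$i))"

definition mnorm :: "complex^'n^'m \<Rightarrow> real" where
  "mnorm M = onorm (\<lambda>v. M *v v)"

end

theory Submission
  imports Defs "HOL-Computational_Algebra.Fundamental_Theorem_Algebra"
begin

text \<open>
  For self-adjoint \<open>h\<close> every eigenvalue \<open>\<lambda>\<close> of \<open>\<theta>(h)\<close> satisfies \<open>|\<lambda>| \<le> \<parallel>h\<parallel>\<close> (spectral radius).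
  Applied to \<open>h + it\<close>, whose norm is at most \<open>sqrt(\<parallel>h\<parallel>\<^sup>2 + t\<^sup>2)\<close>, this makes the eigenvalues real;
  applied to the unitaries \<open>exp(ith)\<close>, it rules out Jordan blocks.  So \<open>\<theta>(h)\<close> is diagonalisable
  with real spectrum, and it remains to see that eigenvectors \<open>a\<close>, \<open>b\<close> for distinct eigenvalues
  are orthogonal.  A suitable real part \<open>h'\<close> of \<open>c exp(ith)\<close> is a self-adjoint contraction with
  \<open>\<theta>(h') a = a\<close> and \<open>\<theta>(h') b = -b\<close>.  The vector states of the unital contraction \<open>\<theta>\<^sub>\<alpha>\<close> are
  hermitian and bounded by the norm, and evaluating them on \<open>a + s b\<close> for suitable \<open>s\<close> forces
  \<open>\<langle>a, b\<rangle> = 0\<close>.  Hence \<open>\<theta>(h)\<close> is hermitian, \<open>\<theta>\<close> is a \<open>*\<close>-homomorphism, and the C*-identity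
  makes it contractive.
\<close>

section \<open>Complex vectors and matrices\<close>

definition cinner :: "complex^'n \<Rightarrow> complex^'n \<Rightarrow> complex" where
  "cinner x y = (\<Sum>i\<in>UNIV. x$i * cnj (y$i))"

lemma cinner_add_left: "cinner (x + y) z = cinner x z + cinner y z"
  by (simp add: cinner_def sum.distrib algebra_simps)

lemma cinner_add_right: "cinner x (y + z) = cinner x y + cinner x z"
  by (simp add: cinner_def sum.distrib algebra_simps)

lemma cinner_diff_left: "cinner (x - y) z = cinner x z - cinner y z"
  by (simp add: cinner_def sum_subtractf algebra_simps)

lemma cinner_diff_right: "cinner x (y - z) = cinner x y - cinner x z"
  by (simp add: cinner_def sum_subtractf algebra_simps)

lemma cinner_scale_left: "cinner (c *s x) y = c * cinner x y"
  by (simp add: cinner_def sum_distrib_left algebra_simps)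

lemma cinner_scale_right: "cinner x (c *s y) = cnj c * cinner x y"
  by (simp add: cinner_def sum_distrib_left algebra_simps)

lemma cinner_zero_left [simp]: "cinner 0 y = 0"
  by (simp add: cinner_def)

lemma cinner_zero_right [simp]: "cinner x 0 = 0"
  by (simp add: cinner_def)

lemma cinner_sum_left: "cinner (\<Sum>i\<in>I. f i) y = (\<Sum>i\<in>I. cinner (f i) y)"
  by (induction I rule: infinite_finite_induct) (auto simp: cinner_add_left)

lemma cinner_sum_right: "cinner x (\<Sum>i\<in>I. f i) = (\<Sum>i\<in>I. cinner x (f i))"
  by (induction I rule: infinite_finite_induct) (auto simp: cinner_add_right)

lemma cnj_cinner: "cnj (cinner x y) = cinner y x"
  by (simp add: cinner_def mult.commute)

lemma norm_vec_power2: "(norm (x::complex^'n))\<^sup>2 = (\<Sum>i\<in>UNIV. (cmod (x$i))\<^sup>2)"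
  by (simp add: norm_vec_def L2_set_def sum_nonneg)

lemma cinner_self: "cinner x x = complex_of_real ((norm x)\<^sup>2)"
  by (simp add: cinner_def norm_vec_power2 complex_mult_cnj cmod_power2)

lemma norm_vector_smult: "norm (c *s (x::complex^'n)) = cmod c * norm x"
proof -
  have "(norm (c *s x))\<^sup>2 = (cmod c * norm x)\<^sup>2"
    by (simp add: norm_vec_power2 power_mult_distrib norm_mult sum_distrib_left)
  then show ?thesis by (simp add: power2_eq_iff_nonneg)
qed

lemma Re_cinner: "Re (cinner x y) = inner x y"
  by (simp add: cinner_def inner_vec_def inner_complex_def Re_sum)

lemma cinner_Cauchy_Schwarz: "cmod (cinner x y) \<le> norm x * norm y"
proof (cases "cinner x y = 0")
  case False
  define c where "c = cinner x y"
  have "cinner x (c *s y) = complex_of_real ((cmod c)\<^sup>2)"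
    by (simp add: cinner_scale_right c_def complex_norm_square mult.commute del: of_real_power)
  then have "(cmod c)\<^sup>2 = inner x (c *s y)"
    by (metis Re_cinner Re_complex_of_real)
  also have "\<dots> \<le> norm x * norm (c *s y)" by (rule norm_cauchy_schwarz)
  also have "\<dots> = cmod c * (norm x * norm y)" by (simp add: norm_vector_smult)
  finally have "cmod c * cmod c \<le> cmod c * (norm x * norm y)" by (simp add: power2_eq_square)
  moreover have "cmod c > 0" using False c_def by simp
  ultimately show ?thesis unfolding c_def by simp
qed simp

lemma cinner_eqI: "(\<And>y. cinner x y = cinner z y) \<Longrightarrow> x = (z::complex^'n)"
proof -
  assume "\<And>y. cinner x y = cinner z y"
  then have "cinner (x - z) (x - z) = 0" by (simp add: cinner_diff_left)
  then show ?thesis by (simp add: cinner_self)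
qed

lemma norm_sum_orthogonal_power2:
  fixes w :: "'i \<Rightarrow> complex^'n"
  assumes "finite R" and orth: "\<And>l m. l \<in> R \<Longrightarrow> m \<in> R \<Longrightarrow> l \<noteq> m \<Longrightarrow> cinner (w l) (w m) = 0"
  shows "(norm (\<Sum>l\<in>R. w l))\<^sup>2 = (\<Sum>l\<in>R. (norm (w l))\<^sup>2)"
proof -
  have diag: "(\<Sum>m\<in>R. cinner (w l) (w m)) = cinner (w l) (w l)" if "l \<in> R" for l
    using \<open>finite R\<close> that orth by (subst sum.remove[of _ l]) (auto intro: sum.neutral)
  have "complex_of_real ((norm (\<Sum>l\<in>R. w l))\<^sup>2) = cinner (\<Sum>l\<in>R. w l) (\<Sum>m\<in>R. w m)"
    by (simp add: cinner_self)
  also have "\<dots> = (\<Sum>l\<in>R. \<Sum>m\<in>R. cinner (w l) (w m))"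
    by (simp add: cinner_sum_left cinner_sum_right) (rule sum.swap)
  also have "\<dots> = complex_of_real (\<Sum>l\<in>R. (norm (w l))\<^sup>2)"
    by (simp add: diag cinner_self)
  finally show ?thesis by (simp only: of_real_eq_iff)
qed

lemma cinner_adj: "cinner (M *v x) y = cinner x (adj M *v y)"
proof -
  have "cinner (M *v x) y = (\<Sum>i\<in>UNIV. \<Sum>j\<in>UNIV. M$i$j * x$j * cnj (y$i))"
    by (simp add: cinner_def matrix_vector_mult_def sum_distrib_right)
  also have "\<dots> = (\<Sum>j\<in>UNIV. \<Sum>i\<in>UNIV. M$i$j * x$j * cnj (y$i))"
    by (rule sum.swap)
  also have "\<dots> = cinner x (adj M *v y)"
    by (simp add: cinner_def matrix_vector_mult_def adj_def sum_distrib_left mult_ac)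
  finally show ?thesis .
qed

lemma hermitian_eigenvectors_orthogonal:
  assumes M: "adj M = M" and x: "M *v x = l *s x" and y: "M *v y = m *s y" and "l \<noteq> m"
  shows "cinner x y = 0"
proof (cases "y = 0")
  case False
  have sym: "cinner (M *v u) w = cinner u (M *v w)" for u w
    by (metis M cinner_adj)
  have "m * cinner y y = cnj m * cinner y y"
    using sym[of y y] by (simp add: y cinner_scale_left cinner_scale_right)
  then have "cnj m = m" using False by (simp add: cinner_self)
  then have "l * cinner x y = m * cinner x y"
    using sym[of x y] by (simp add: x y cinner_scale_left cinner_scale_right)
  then show ?thesis using \<open>l \<noteq> m\<close> by simp
qed simp

lemma matrix_vector_mult_sum: "M *v (\<Sum>i\<in>I. f i) = (\<Sum>i\<in>I. M *v f i)"
  by (induction I rule: infinite_finite_induct) (auto simp: matrix_vector_right_distrib)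

lemma matrix_vector_mult_eigen_sum:
  assumes "\<And>v. (\<Sum>l\<in>R. P l *v v) = v"
    and "\<And>l v. l \<in> R \<Longrightarrow> M *v (P l *v v) = l *s (P l *v v)"
  shows "M *v v = (\<Sum>l\<in>R. l *s (P l *v v))"
proof -
  have "M *v v = (\<Sum>l\<in>R. M *v (P l *v v))"
    by (metis assms(1) matrix_vector_mult_sum)
  also have "\<dots> = (\<Sum>l\<in>R. l *s (P l *v v))"
    using assms(2) by (intro sum.cong) auto
  finally show ?thesis .
qed

lemma mscale_matrix_vector_mult: "mscale c M *v v = c *s (M *v v)"
  by (simp add: mscale_def matrix_vector_mult_def vec_eq_iff sum_distrib_left mult.assoc)

lemma mscale_of_real: "mscale (complex_of_real r) M = r *\<^sub>R M"
proof -
  have "(r *\<^sub>R M)$i$j = complex_of_real r * M$i$j" for i j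
    by (simp only: vector_scaleR_component) (simp add: scaleR_conv_of_real)
  then show ?thesis by (simp add: mscale_def vec_eq_iff)
qed

lemma adj_add: "adj (M + N) = adj M + adj N"
  by (simp add: adj_def vec_eq_iff)

lemma adj_mscale: "adj (mscale c M) = mscale (cnj c) (adj M)"
  by (simp add: adj_def mscale_def vec_eq_iff)

lemma adj_adj [simp]: "adj (adj M) = M"
  by (simp add: adj_def vec_eq_iff)

lemma adj_mat_1: "adj (mat 1 :: complex^'n^'n) = mat 1"
  by (simp add: adj_def mat_def vec_eq_iff)

lemma norm_matrix_vector_mult_le_mnorm: "norm (M *v v) \<le> mnorm M * norm (v::complex^'n)"
  unfolding mnorm_def by (rule onorm) simp

lemma cinner_matrix_vector_mult_le_mnorm: "cmod (cinner (M *v x) x) \<le> mnorm M * (norm x)\<^sup>2"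
proof -
  have "cmod (cinner (M *v x) x) \<le> norm (M *v x) * norm x" by (rule cinner_Cauchy_Schwarz)
  also have "\<dots> \<le> mnorm M * norm x * norm x"
    by (simp add: mult_right_mono norm_matrix_vector_mult_le_mnorm)
  finally show ?thesis by (simp add: power2_eq_square mult.assoc)
qed

lemma quadratic_growth_imp_zero:
  fixes a b N :: real
  assumes "b > 0" and growth: "\<And>t. (a + t * b)\<^sup>2 \<le> N * b\<^sup>2 + t\<^sup>2 * b\<^sup>2"
  shows "a = 0"
proof (rule ccontr)
  assume "a \<noteq> 0"
  define t where "t = (N * b\<^sup>2 + 1) / (2 * a * b)"
  have "2 * t * a * b = N * b\<^sup>2 + 1" using \<open>a \<noteq> 0\<close> \<open>b > 0\<close> by (simp add: t_def field_simps)
  moreover have "(a + t * b)\<^sup>2 = a\<^sup>2 + 2 * t * a * b + t\<^sup>2 * b\<^sup>2"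
    by (simp add: power2_eq_square algebra_simps)
  ultimately show False using growth[of t] zero_le_power2[of a] by linarith
qed

lemma power_le_const_mult_power_imp_le:
  fixes a b C :: real
  assumes "0 \<le> b" and le: "\<And>k. a ^ k \<le> C * b ^ k"
  shows "a \<le> b"
proof (rule ccontr)
  assume "\<not> a \<le> b"
  show False
  proof (cases "b = 0")
    case True
    then show False using le[of 1] \<open>\<not> a \<le> b\<close> by simp
  next
    case False
    then have b: "b > 0" using \<open>0 \<le> b\<close> by simp
    have "a / b > 1" using \<open>\<not> a \<le> b\<close> b by simp
    then obtain k where k: "C < (a / b) ^ k" using real_arch_pow by blast
    have "(a / b) ^ k * b ^ k \<le> C * b ^ k" using le[of k] b by (simp add: power_divide)
    then have "(a / b) ^ k \<le> C" using b by simp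
    then show False using k by simp
  qed
qed

lemma lagrange_basis_sum_eq_1:
  fixes R :: "'a::field set"
  assumes R: "finite R" "R \<noteq> {}"
  shows "(\<Sum>l\<in>R. \<Prod>z\<in>R-{l}. smult (1/(l - z)) [:-z, 1:]) = 1"
proof (rule poly_eqI_degree[where A=R])
  fix x assume x: "x \<in> R"
  have "poly (\<Sum>l\<in>R. \<Prod>z\<in>R-{l}. smult (1/(l - z)) [:-z, 1:]) x
        = (\<Sum>l\<in>R. \<Prod>z\<in>R-{l}. (x - z) / (l - z))"
    by (simp add: poly_sum poly_prod diff_divide_distrib)
  also have "\<dots> = (\<Prod>z\<in>R-{x}. (x - z) / (x - z)) + (\<Sum>l\<in>R-{x}. \<Prod>z\<in>R-{l}. (x - z) / (l - z))"
    using R x by (simp add: sum.remove)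
  also have "(\<Sum>l\<in>R-{x}. \<Prod>z\<in>R-{l}. (x - z) / (l - z)) = 0"
    using R x by (intro sum.neutral ballI prod_zero) auto
  also have "(\<Prod>z\<in>R-{x}. (x - z) / (x - z)) = 1"
    by (intro prod.neutral) auto
  finally show "poly (\<Sum>l\<in>R. \<Prod>z\<in>R-{l}. smult (1/(l - z)) [:-z, 1:]) x = poly 1 x" by simp
next
  have "degree (\<Prod>z\<in>R-{l}. smult (1/(l - z)) [:-z, 1:]) \<le> card R - 1" if "l \<in> R" for l
  proof -
    have "degree (\<Prod>z\<in>R-{l}. smult (1/(l - z)) [:-z, 1:])
          \<le> (\<Sum>z\<in>R-{l}. degree (smult (1/(l - z)) [:-z, 1:]))"
      using degree_prod_sum_le[of "R-{l}" "\<lambda>z. smult (1/(l - z)) [:-z, 1:]"] R by (simp add: o_def)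
    also have "\<dots> \<le> (\<Sum>z\<in>R-{l}. 1)"
      by (intro sum_mono) (simp add: degree_smult_le)
    also have "\<dots> = card R - 1" using R that by simp
    finally show ?thesis .
  qed
  then have "degree (\<Sum>l\<in>R. \<Prod>z\<in>R-{l}. smult (1/(l - z)) [:-z, 1:]) \<le> card R - 1"
    by (intro degree_sum_le R(1))
  moreover have "card R > 0" using R by (simp add: card_gt_0_iff)
  ultimately show "degree (\<Sum>l\<in>R. \<Prod>z\<in>R-{l}. smult (1/(l - z)) [:-z, 1:]) < card R" by linarith
next
  show "degree (1::'a poly) < card R" using R by (simp add: card_gt_0_iff)
qed

section \<open>Commutative unital C*-algebras\<close>

locale comm_cstar_algebra =
  fixes sm :: "complex \<Rightarrow> 'a::{real_normed_algebra_1,comm_ring_1,banach} \<Rightarrow> 'a"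
    and st :: "'a \<Rightarrow> 'a"
  assumes comm_unital_cstar: "comm_unital_cstar sm st"
begin

lemma
  shows sm_one [simp]: "sm 1 x = x"
    and sm_mult_left: "sm (a * b) x = sm a (sm b x)"
    and sm_add_right: "sm a (x + y) = sm a x + sm a y"
    and sm_add_left: "sm (a + b) x = sm a x + sm b x"
    and sm_of_real: "sm (complex_of_real r) x = r *\<^sub>R x"
    and sm_mult: "sm a (x * y) = sm a x * y"
    and norm_sm: "norm (sm a x) = cmod a * norm x"
    and st_add: "st (x + y) = st x + st y"
    and st_sm: "st (sm a x) = sm (cnj a) (st x)"
    and st_st [simp]: "st (st x) = x"
    and st_mult: "st (x * y) = st y * st x"
    and norm_st_mult_self: "norm (st x * x) = (norm x)\<^sup>2"
  using comm_unital_cstar by (simp_all add: comm_unital_cstar_def)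

lemma sm_zero_left [simp]: "sm 0 x = 0"
  using sm_of_real[of 0 x] by simp

lemma sm_zero_right [simp]: "sm a 0 = 0"
  using sm_add_right[of a 0 0] by simp

lemma sm_neg_right: "sm a (- x) = - sm a x"
  using sm_add_right[of a x "-x"] by (simp add: eq_neg_iff_add_eq_0 add.commute)

lemma sm_diff_right: "sm a (x - y) = sm a x - sm a y"
  using sm_add_right[of a x "-y"] by (simp add: sm_neg_right)

lemma sm_neg_left: "sm (- a) x = - sm a x"
  using sm_add_left[of a "-a" x] by (simp add: eq_neg_iff_add_eq_0 add.commute)

lemma sm_one_mult_sm_one: "sm a 1 * sm b 1 = sm (a * b) 1"
  by (metis sm_mult sm_mult_left mult_1_left)

lemma prod_sm_one: "(\<Prod>i\<in>I. sm (f i) 1) = sm (\<Prod>i\<in>I. f i) 1"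
  by (induction I rule: infinite_finite_induct) (auto simp: sm_one_mult_sm_one)

lemma st_neg: "st (- x) = - st x"
  using st_add[of x "-x"] st_add[of 0 0] by (simp add: eq_neg_iff_add_eq_0 add.commute)

lemma st_diff: "st (x - y) = st x - st y"
  using st_add[of x "-y"] by (simp add: st_neg)

lemma st_one [simp]: "st 1 = 1"
  using st_mult[of "st 1" 1] by simp

lemma st_scaleR: "st (r *\<^sub>R x) = r *\<^sub>R st x"
  by (metis sm_of_real st_sm complex_cnj_complex_of_real)

lemma st_power: "st (x ^ k) = st x ^ k"
  by (induction k) (auto simp: st_mult mult.commute)

lemma norm_st [simp]: "norm (st x) = norm x"
proof -
  have le: "norm y \<le> norm (st y)" for y
  proof (cases "y = 0")
    case False
    have "(norm y)\<^sup>2 = norm (st y * y)" by (rule norm_st_mult_self [symmetric])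
    also have "\<dots> \<le> norm (st y) * norm y" by (rule norm_mult_ineq)
    finally show ?thesis using False by (simp add: power2_eq_square)
  qed simp
  show ?thesis using le[of x] le[of "st x"] by simp
qed

lemma bounded_linear_st: "bounded_linear st"
  by (rule bounded_linear_intro[where K=1]) (auto simp: st_add st_scaleR)

lemma selfadjoint_decomposition: "\<exists>f1 f2. st f1 = f1 \<and> st f2 = f2 \<and> f = f1 + sm \<i> f2"
proof -
  define f1 where "f1 = (1/2) *\<^sub>R (f + st f)"
  define f2 where "f2 = sm (- (\<i>/2)) (f - st f)"
  have "st f1 = f1" by (simp add: f1_def st_scaleR st_add add.commute)
  moreover have "st f2 = f2"
    by (simp add: f2_def st_sm st_diff sm_neg_left sm_diff_right)
  moreover have "sm \<i> f2 = (1/2) *\<^sub>R (f - st f)"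
  proof -
    have "\<i> * (- (\<i>/2)) = complex_of_real (1/2)" by simp
    then show ?thesis by (metis f2_def sm_mult_left sm_of_real)
  qed
  then have "f = f1 + sm \<i> f2"
    by (simp add: f1_def flip: scaleR_right_distrib)
  ultimately show ?thesis by blast
qed

text \<open>The C*-identity, applied to \<open>h + it\<close>, whose square modulus is \<open>h\<^sup>2 + t\<^sup>2\<close>.\<close>

lemma norm_selfadjoint_plus_imaginary:
  assumes h: "st h = h"
  shows "(norm (h + sm (\<i> * complex_of_real t) 1))\<^sup>2 \<le> (norm h)\<^sup>2 + t\<^sup>2"
proof -
  define z where "z = h + sm (\<i> * complex_of_real t) 1"
  have sz: "st z = h + sm (- (\<i> * complex_of_real t)) 1"
    by (simp add: z_def st_add h st_sm)
  have "st z * z = h * h + (sm (- (\<i> * complex_of_real t)) 1 + sm (\<i> * complex_of_real t) 1) * h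
        + sm (- (\<i> * complex_of_real t)) 1 * sm (\<i> * complex_of_real t) 1"
    unfolding sz by (simp add: z_def algebra_simps)
  also have "\<dots> = h * h + sm (complex_of_real (t\<^sup>2)) 1"
  proof -
    have "- (\<i> * complex_of_real t) * (\<i> * complex_of_real t) = complex_of_real (t\<^sup>2)"
      by (simp add: power2_eq_square algebra_simps)
    then show ?thesis by (simp add: sm_one_mult_sm_one flip: sm_add_left)
  qed
  finally have "st z * z = h * h + t\<^sup>2 *\<^sub>R 1" by (simp add: sm_of_real del: of_real_power)
  then have "(norm z)\<^sup>2 = norm (h * h + t\<^sup>2 *\<^sub>R 1)" by (metis norm_st_mult_self)
  also have "\<dots> \<le> norm (h * h) + t\<^sup>2"
    using norm_triangle_ineq[of "h * h" "t\<^sup>2 *\<^sub>R 1"] by simp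
  also have "\<dots> \<le> (norm h)\<^sup>2 + t\<^sup>2"
    using norm_mult_ineq[of h h] by (simp add: power2_eq_square)
  finally show ?thesis by (simp add: z_def)
qed

lemma st_exp: "st (exp x) = exp (st x)"
proof -
  have "(\<lambda>k. st (x^k /\<^sub>R fact k)) sums st (exp x)"
    using bounded_linear.sums[OF bounded_linear_st exp_converges] .
  then have "(\<lambda>k. st x ^ k /\<^sub>R fact k) sums st (exp x)"
    by (simp add: st_scaleR st_power)
  then show ?thesis using exp_converges sums_unique2 by blast
qed

lemma st_exp_imaginary_selfadjoint:
  assumes "st h = h"
  shows "st (exp (sm (\<i> * complex_of_real t) h)) = exp (sm (- (\<i> * complex_of_real t)) h)"
  by (simp add: st_exp st_sm assms)

lemma norm_exp_imaginary_selfadjoint: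
  assumes "st h = h"
  shows "norm (exp (sm (\<i> * complex_of_real t) h)) = 1"
proof -
  define u where "u = exp (sm (\<i> * complex_of_real t) h)"
  have "st u * u = exp (sm (- (\<i> * complex_of_real t)) h + sm (\<i> * complex_of_real t) h)"
    unfolding u_def st_exp_imaginary_selfadjoint[OF assms]
    by (rule exp_add_commuting [symmetric]) (simp add: mult.commute)
  also have "\<dots> = 1" by (simp flip: sm_add_left)
  finally have "(norm u)\<^sup>2 = 1" using norm_st_mult_self[of u] by simp
  then have "norm u = 1" using norm_ge_zero[of u] by (simp add: power2_eq_1_iff)
  then show ?thesis by (simp add: u_def)
qed

definition peval :: "complex poly \<Rightarrow> 'a \<Rightarrow> 'a" where
  "peval p x = poly (map_poly (\<lambda>c. sm c 1) p) x"

lemma peval_0 [simp]: "peval 0 x = 0"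
  by (simp add: peval_def)

lemma peval_pCons: "peval (pCons a p) x = sm a 1 + x * peval p x"
  by (simp add: peval_def map_poly_pCons)

lemma peval_one [simp]: "peval 1 x = 1"
  by (simp add: one_pCons peval_pCons)

lemma peval_linear: "peval [:-z, 1:] x = x - sm z 1"
  by (simp add: peval_pCons sm_neg_left)

lemma peval_smult: "peval (smult a p) x = sm a 1 * peval p x"
  by (induction p) (simp_all add: peval_pCons sm_one_mult_sm_one algebra_simps)

lemma peval_add: "peval (p + q) x = peval p x + peval q x"
proof (induction p arbitrary: q)
  case (pCons a p)
  obtain b q' where q: "q = pCons b q'" by (cases q) auto
  show ?case using pCons.IH[of q'] by (simp add: q peval_pCons sm_add_left distrib_left add_ac)
qed simp

lemma peval_mult: "peval (p * q) x = peval p x * peval q x"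
  by (induction p) (simp_all add: peval_pCons peval_add peval_smult algebra_simps)

lemma peval_diff: "peval (p - q) x = peval p x - peval q x"
proof -
  have "peval (- q) x = - peval q x"
    using peval_smult[of "-1" q x] by (simp add: sm_neg_left)
  then show ?thesis using peval_add[of p "- q" x] by simp
qed

lemma peval_sum: "peval (\<Sum>i\<in>I. f i) x = (\<Sum>i\<in>I. peval (f i) x)"
  by (induction I rule: infinite_finite_induct) (auto simp: peval_add)

lemma peval_prod: "peval (\<Prod>i\<in>I. f i) x = (\<Prod>i\<in>I. peval (f i) x)"
  by (induction I rule: infinite_finite_induct) (auto simp: peval_mult)

lemma peval_power: "peval (p ^ k) x = peval p x ^ k"
  by (induction k) (auto simp: peval_mult)

lemma peval_monom: "peval (monom c k) x = sm c 1 * x ^ k"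
proof -
  have "peval [:0, 1:] x = x" by (simp add: peval_pCons)
  then show ?thesis by (simp add: monom_altdef peval_smult peval_power)
qed

end

section \<open>Unital homomorphisms into matrices\<close>

locale cstar_matrix_rep = comm_cstar_algebra +
  fixes \<theta> :: "'a \<Rightarrow> complex^'n::finite^'n"
  assumes th_add: "\<And>x y. \<theta> (x + y) = \<theta> x + \<theta> y"
    and th_sm: "\<And>c x. \<theta> (sm c x) = mscale c (\<theta> x)"
    and th_mult: "\<And>x y. \<theta> (x * y) = \<theta> x ** \<theta> y"
    and th_one: "\<theta> 1 = mat 1"
    and th_cont: "continuous_on UNIV \<theta>"
begin

lemma th_zero [simp]: "\<theta> 0 = 0"
  using th_add[of 0 0] by simp

lemma th_diff: "\<theta> (x - y) = \<theta> x - \<theta> y"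
  using th_add[of "x - y" y] by (simp add: eq_diff_eq)

lemma th_scaleR: "\<theta> (r *\<^sub>R x) = r *\<^sub>R \<theta> x"
  by (metis sm_of_real th_sm mscale_of_real)

lemma th_sum: "\<theta> (\<Sum>i\<in>I. f i) = (\<Sum>i\<in>I. \<theta> (f i))"
  by (induction I rule: infinite_finite_induct) (auto simp: th_add)

lemma th_mult_apply: "\<theta> (x * y) *v v = \<theta> x *v (\<theta> y *v v)"
  by (simp add: th_mult matrix_vector_mul_assoc)

lemma th_sm_apply: "\<theta> (sm c x) *v v = c *s (\<theta> x *v v)"
  by (simp add: th_sm mscale_matrix_vector_mult)

lemma th_scalar_apply: "\<theta> (sm c 1) *v v = c *s v"
  by (simp add: th_sm_apply th_one)

lemma th_add_apply: "\<theta> (x + y) *v v = \<theta> x *v v + \<theta> y *v v"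
  by (simp add: th_add matrix_vector_mult_add_rdistrib)

lemma th_diff_apply: "\<theta> (x - y) *v v = \<theta> x *v v - \<theta> y *v v"
  by (simp add: th_diff matrix_vector_mult_diff_rdistrib)

lemma th_sum_apply: "\<theta> (\<Sum>i\<in>I. f i) *v v = (\<Sum>i\<in>I. \<theta> (f i) *v v)"
  by (induction I rule: infinite_finite_induct) (auto simp: th_add_apply)

lemma th_scaleR_apply: "\<theta> (r *\<^sub>R x) *v v = complex_of_real r *s (\<theta> x *v v)"
  by (metis sm_of_real th_sm_apply)

lemma th_apply_commute: "\<theta> x *v (\<theta> y *v v) = \<theta> y *v (\<theta> x *v v)"
  by (metis th_mult_apply mult.commute)

lemma th_bounded_linear: "bounded_linear \<theta>"
proof -
  have "isCont \<theta> 0" using th_cont by (simp add: continuous_on_eq_continuous_at)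
  then obtain d where d: "d > 0" "\<And>x. dist x 0 < d \<Longrightarrow> dist (\<theta> x) (\<theta> 0) < 1"
    unfolding continuous_at_eps_delta by (meson zero_less_one)
  have "norm (\<theta> f) \<le> norm f * (2 / d)" for f
  proof (cases "f = 0")
    case False
    define s where "s = d / (2 * norm f)"
    have s: "s > 0" using False d by (simp add: s_def)
    have "norm (s *\<^sub>R f) < d" using False d by (simp add: s_def)
    then have "s * norm (\<theta> f) < 1" using d(2)[of "s *\<^sub>R f"] s by (simp add: th_scaleR)
    then have "norm (\<theta> f) < 1 / s" using s by (simp add: field_simps)
    then show ?thesis using False d by (simp add: s_def field_simps)
  qed simp
  then show ?thesis
    by (intro bounded_linear_intro[where K="2/d"]) (auto simp: th_add th_scaleR)
qed

lemma th_apply_bounded_linear: "bounded_linear (\<lambda>f. \<theta> f *v v)"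
proof -
  have "linear (\<lambda>M::complex^'n^'n. M *v v)"
    by (rule linearI)
      (simp add: matrix_vector_mult_add_rdistrib, simp add: matrix_vector_mult_def vec_eq_iff scaleR_sum_right)
  then have "bounded_linear (\<lambda>M::complex^'n^'n. M *v v)"
    by (simp only: linear_conv_bounded_linear)
  then show ?thesis
    using bounded_linear_compose th_bounded_linear by blast
qed

lemma th_power_eigen: "\<theta> f *v v = c *s v \<Longrightarrow> \<theta> (f ^ k) *v v = c ^ k *s v"
proof (induction k)
  case (Suc k)
  have "\<theta> (f ^ Suc k) *v v = \<theta> f *v (\<theta> (f ^ k) *v v)" by (simp add: th_mult_apply)
  also have "\<dots> = c ^ k *s (\<theta> f *v v)" using Suc by (simp add: vector_scalar_commute)
  also have "\<dots> = c ^ Suc k *s v" using Suc by (simp add: vector_smult_assoc mult.commute)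
  finally show ?case .
qed (simp add: th_one)

text \<open>Spectral radius: \<open>|c|\<^sup>k \<parallel>v\<parallel> = \<parallel>\<theta>(f\<^sup>k) v\<parallel> \<le> K \<parallel>f\<parallel>\<^sup>k\<close> for all \<open>k\<close>.\<close>

lemma eigenvalue_norm_le:
  assumes ev: "\<theta> f *v v = c *s v" and "v \<noteq> 0"
  shows "cmod c \<le> norm f"
proof -
  obtain K where K: "K > 0" "\<And>g. norm (\<theta> g *v v) \<le> norm g * K"
    using bounded_linear.pos_bounded[OF th_apply_bounded_linear] by blast
  have "cmod c ^ k \<le> (K / norm v) * norm f ^ k" for k
  proof -
    have "cmod c ^ k * norm v = norm (\<theta> (f ^ k) *v v)"
      using th_power_eigen[OF ev, of k] by (simp add: norm_vector_smult norm_power)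
    also have "\<dots> \<le> norm (f ^ k) * K" by (rule K(2))
    also have "\<dots> \<le> norm f ^ k * K" using K(1) by (intro mult_right_mono norm_power_ineq) auto
    finally have "cmod c ^ k * norm v \<le> norm f ^ k * K" .
    then have "cmod c ^ k \<le> norm f ^ k * K / norm v"
      using \<open>v \<noteq> 0\<close> by (simp add: pos_le_divide_eq)
    then show ?thesis by (simp add: mult.commute)
  qed
  then show ?thesis by (rule power_le_const_mult_power_imp_le[OF norm_ge_zero])
qed

lemma eigenvalue_selfadjoint_real:
  assumes h: "st h = h" and ev: "\<theta> h *v v = c *s v" and "v \<noteq> 0"
  shows "Im c = 0"
proof (rule quadratic_growth_imp_zero[where b=1 and N="(norm h)\<^sup>2"])
  fix t :: real
  have "\<theta> (h + sm (\<i> * complex_of_real t) 1) *v v = (c + \<i> * complex_of_real t) *s v"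
    by (simp add: th_add_apply th_scalar_apply ev vector_sadd_rdistrib)
  then have "cmod (c + \<i> * complex_of_real t) \<le> norm (h + sm (\<i> * complex_of_real t) 1)"
    using eigenvalue_norm_le \<open>v \<noteq> 0\<close> by blast
  then have "(cmod (c + \<i> * complex_of_real t))\<^sup>2 \<le> (norm (h + sm (\<i> * complex_of_real t) 1))\<^sup>2"
    by (simp add: power_mono)
  also have "\<dots> \<le> (norm h)\<^sup>2 + t\<^sup>2" by (rule norm_selfadjoint_plus_imaginary[OF h])
  finally have "(cmod (c + \<i> * complex_of_real t))\<^sup>2 \<le> (norm h)\<^sup>2 + t\<^sup>2" .
  moreover have "(Im c + t)\<^sup>2 \<le> (cmod (c + \<i> * complex_of_real t))\<^sup>2"
    by (simp add: cmod_power2)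
  ultimately show "(Im c + t * 1)\<^sup>2 \<le> (norm h)\<^sup>2 * 1\<^sup>2 + t\<^sup>2 * 1\<^sup>2" by simp
qed simp

lemma th_exp_apply_sums: "(\<lambda>k. \<theta> (x^k /\<^sub>R fact k) *v w) sums (\<theta> (exp x) *v w)"
  using bounded_linear.sums[OF th_apply_bounded_linear exp_converges] .

lemma th_exp_eigen:
  assumes ev: "\<theta> x *v w = c *s w"
  shows "\<theta> (exp x) *v w = exp c *s w"
proof -
  have "bounded_linear (\<lambda>z::complex. z *s w)"
  proof (rule bounded_linear_intro[where K="norm w"])
    show "(r *\<^sub>R z) *s w = r *\<^sub>R (z *s w)" for r z by (simp add: vec_eq_iff)
  qed (auto simp: vector_sadd_rdistrib norm_vector_smult)
  from bounded_linear.sums[OF this exp_converges]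
  have "(\<lambda>k. (c^k /\<^sub>R fact k) *s w) sums (exp c *s w)" .
  moreover have "\<theta> (x^k /\<^sub>R fact k) *v w = (c^k /\<^sub>R fact k) *s w" for k
    using th_power_eigen[OF ev, of k]
    by (simp only: th_scaleR_apply) (simp add: vector_smult_assoc scaleR_conv_of_real)
  ultimately have "(\<lambda>k. \<theta> (x^k /\<^sub>R fact k) *v w) sums (exp c *s w)" by simp
  then show ?thesis using th_exp_apply_sums sums_unique2 by blast
qed

lemma th_exp_nilpotent:
  assumes w: "\<theta> x *v w = u" and u: "\<theta> x *v u = 0"
  shows "\<theta> (exp x) *v w = w + u"
proof -
  have "\<theta> (x^k /\<^sub>R fact k) *v w = 0" if "k \<ge> 2" for k
  proof -
    have "x^k = x^(k-2) * (x * x)"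
      using that by (metis le_add_diff_inverse2 power2_eq_square power_add)
    then show ?thesis by (simp add: th_scaleR_apply th_mult_apply w u)
  qed
  then have "(\<lambda>k. \<theta> (x^k /\<^sub>R fact k) *v w) sums (\<Sum>k\<in>{0,1}. \<theta> (x^k /\<^sub>R fact k) *v w)"
    by (intro sums_finite) auto
  moreover have "(\<Sum>k\<in>{0,1}. \<theta> (x^k /\<^sub>R fact k) *v w) = w + u"
    by (simp add: th_one w)
  ultimately show ?thesis using th_exp_apply_sums sums_unique2 by metis
qed

lemma th_exp_jordan_chain:
  assumes w: "\<theta> x *v w = c *s w + u" and u: "\<theta> x *v u = c *s u"
  shows "\<theta> (exp x) *v w = exp c *s (w + u)"
proof -
  define y where "y = x - sm c 1"
  have "exp x = exp (sm c 1) * exp y"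
    unfolding y_def by (subst exp_add_commuting [symmetric]) (auto simp: mult.commute)
  moreover have "\<theta> y *v w = u" "\<theta> y *v u = 0"
    using w u by (simp_all add: y_def th_diff_apply th_scalar_apply)
  then have "\<theta> (exp y) *v w = w + u" by (rule th_exp_nilpotent)
  moreover have "\<theta> (exp (sm c 1)) *v z = exp c *s z" for z
    by (rule th_exp_eigen) (rule th_scalar_apply)
  ultimately show ?thesis by (simp add: th_mult_apply)
qed

text \<open>A Jordan chain would make \<open>\<theta>(exp(ith))\<close> grow linearly in \<open>t\<close>, although \<open>exp(ith)\<close> is unitary.\<close>

lemma selfadjoint_no_jordan_chain:
  assumes h: "st h = h" and v: "\<theta> h *v v = r *s v" and w: "\<theta> h *v w = r *s w + v"
  shows "v = 0"
proof (rule ccontr)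
  assume "v \<noteq> 0"
  obtain \<rho> where r: "r = complex_of_real \<rho>"
    using eigenvalue_selfadjoint_real[OF h v \<open>v \<noteq> 0\<close>] by (metis complex_is_Real_iff Reals_cases)
  obtain K where K: "K > 0" "\<And>f. norm (\<theta> f *v w) \<le> norm f * K"
    using bounded_linear.pos_bounded[OF th_apply_bounded_linear] by blast
  have bound: "\<bar>t\<bar> * norm v \<le> K + norm w" for t :: real
  proof -
    define x where "x = sm (\<i> * complex_of_real t) h"
    have "\<theta> x *v w = (\<i> * complex_of_real t * r) *s w + (\<i> * complex_of_real t) *s v"
      by (simp add: x_def th_sm_apply w vector_add_ldistrib vector_smult_assoc)
    moreover have "\<theta> x *v ((\<i> * complex_of_real t) *s v) = (\<i> * complex_of_real t * r) *s ((\<i> * complex_of_real t) *s v)"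
      by (simp add: x_def th_sm_apply vector_scalar_commute v vector_smult_assoc mult_ac)
    ultimately have "\<theta> (exp x) *v w = exp (\<i> * complex_of_real t * r) *s (w + (\<i> * complex_of_real t) *s v)"
      by (rule th_exp_jordan_chain)
    moreover have "cmod (exp (\<i> * complex_of_real t * r)) = 1"
      unfolding r by (metis norm_exp_i_times mult.assoc of_real_mult)
    ultimately have "norm (\<theta> (exp x) *v w) = norm (w + (\<i> * complex_of_real t) *s v)"
      by (simp only: norm_vector_smult mult_1)
    moreover have "norm (\<theta> (exp x) *v w) \<le> K"
      using K(2)[of "exp x"] norm_exp_imaginary_selfadjoint[OF h, of t] by (simp add: x_def)
    moreover have "norm ((\<i> * complex_of_real t) *s v) \<le> norm (w + (\<i> * complex_of_real t) *s v) + norm w"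
      by (metis add_diff_cancel_left' norm_triangle_ineq4 add.commute)
    ultimately show ?thesis by (simp add: norm_vector_smult norm_mult)
  qed
  define t where "t = (K + norm w + 1) / norm v"
  have "\<bar>t\<bar> * norm v = K + norm w + 1"
    using \<open>v \<noteq> 0\<close> K(1) by (simp add: t_def)
  then show False using bound[of t] by simp
qed

lemma exists_annihilating_poly: "\<exists>p. p \<noteq> 0 \<and> \<theta> (peval p g) = 0"
proof -
  define N where "N = DIM(complex^'n^'n)"
  define M where "M k = \<theta> (g ^ k)" for k
  have th_monom: "\<theta> (peval (monom (complex_of_real r) k) g) = r *\<^sub>R M k" for r k
    by (simp add: peval_monom M_def sm_of_real th_scaleR)
  show ?thesis
  proof (cases "inj_on M {..N}")
    case True
    then have "card (M ` {..N}) = N + 1" by (simp add: card_image)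
    then have "\<not> independent (M ` {..N})" using independent_bound[of "M ` {..N}"] N_def by auto
    then obtain u where u: "\<exists>v\<in>M ` {..N}. u v \<noteq> 0" "(\<Sum>v\<in>M ` {..N}. u v *\<^sub>R v) = 0"
      using real_vector.dependent_finite[of "M ` {..N}"] by auto
    define p where "p = (\<Sum>k\<le>N. monom (complex_of_real (u (M k))) k)"
    have "\<theta> (peval p g) = (\<Sum>k\<le>N. u (M k) *\<^sub>R M k)"
      by (simp add: p_def peval_sum th_sum th_monom)
    also have "\<dots> = 0" using u(2) by (simp add: sum.reindex[OF True])
    finally have "\<theta> (peval p g) = 0" .
    moreover obtain k where "k \<le> N" "u (M k) \<noteq> 0" using u(1) by auto
    then have "coeff p k \<noteq> 0" by (simp add: p_def coeff_sum)
    then have "p \<noteq> 0" by auto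
    ultimately show ?thesis by blast
  next
    case False
    then obtain i j where ij: "i \<le> N" "j \<le> N" "i \<noteq> j" "M i = M j"
      unfolding inj_on_def by auto
    define p where "p = monom 1 i - monom (1::complex) j"
    have "coeff p i = 1" using ij by (simp add: p_def)
    then have "p \<noteq> 0" by auto
    moreover have "\<theta> (peval p g) = 0"
      using th_monom[of 1 i] th_monom[of 1 j] ij(4) by (simp add: p_def peval_diff th_diff)
    ultimately show ?thesis by blast
  qed
qed

lemma selfadjoint_annihilator_square_free:
  assumes g: "st g = g" and sq: "\<theta> ((g - sm z 1)\<^sup>2 * S) = 0"
  shows "\<theta> ((g - sm z 1) * S) = 0"
proof -
  define D where "D = g - sm z 1"
  have "\<theta> D *v (\<theta> S *v v) = 0" for v
  proof -
    have "\<theta> (D * (D * S)) *v v = 0" using sq by (simp add: D_def power2_eq_square mult.assoc)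
    then have DD: "\<theta> D *v (\<theta> D *v (\<theta> S *v v)) = 0" by (simp add: th_mult_apply)
    have g_apply: "\<theta> g *v x = z *s x + \<theta> D *v x" for x
      by (simp add: D_def th_diff_apply th_scalar_apply)
    show ?thesis
      by (rule selfadjoint_no_jordan_chain[OF g, where r=z and w="\<theta> S *v v"]) (simp_all add: g_apply DD)
  qed
  then show ?thesis by (simp add: matrix_eq th_mult_apply D_def [symmetric])
qed

lemma selfadjoint_annihilator_power:
  assumes g: "st g = g"
  shows "0 < k \<Longrightarrow> \<theta> ((g - sm z 1) ^ k * S) = 0 \<Longrightarrow> \<theta> ((g - sm z 1) * S) = 0"
proof (induction k)
  case (Suc k)
  show ?case
  proof (cases k)
    case (Suc j)
    have "\<theta> ((g - sm z 1)\<^sup>2 * ((g - sm z 1) ^ j * S)) = 0"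
      using Suc.prems \<open>k = Suc j\<close> by (simp add: power2_eq_square mult.assoc)
    then have "\<theta> ((g - sm z 1) ^ k * S) = 0"
      using selfadjoint_annihilator_square_free[OF g] \<open>k = Suc j\<close> by (simp add: mult.assoc)
    then show ?thesis using Suc.IH \<open>k = Suc j\<close> by simp
  qed (use Suc.prems in simp)
qed simp

lemma selfadjoint_annihilator_radical:
  assumes g: "st g = g"
  shows "finite R \<Longrightarrow> \<forall>z\<in>R. 0 < m z \<Longrightarrow> \<theta> ((\<Prod>z\<in>R. (g - sm z 1) ^ m z) * S) = 0
    \<Longrightarrow> \<theta> ((\<Prod>z\<in>R. g - sm z 1) * S) = 0"
proof (induction R arbitrary: S rule: finite_induct)
  case (insert z R)
  have "\<theta> ((\<Prod>w\<in>R. (g - sm w 1) ^ m w) * ((g - sm z 1) ^ m z * S)) = 0"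
    using insert by (simp add: mult_ac)
  then have "\<theta> ((\<Prod>w\<in>R. g - sm w 1) * ((g - sm z 1) ^ m z * S)) = 0"
    using insert by blast
  then have "\<theta> ((g - sm z 1) ^ m z * ((\<Prod>w\<in>R. g - sm w 1) * S)) = 0"
    by (simp add: mult_ac)
  with insert.prems have "\<theta> ((g - sm z 1) * ((\<Prod>w\<in>R. g - sm w 1) * S)) = 0"
    by (intro selfadjoint_annihilator_power[OF g, of "m z"]) simp_all
  then show ?case using insert by (simp add: mult_ac)
qed simp

lemma selfadjoint_squarefree_annihilator:
  assumes g: "st g = g"
  obtains R where "finite R" "R \<noteq> {}" "\<theta> (\<Prod>z\<in>R. g - sm z 1) = 0"
proof -
  obtain p where p: "p \<noteq> 0" "\<theta> (peval p g) = 0" using exists_annihilating_poly by blast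
  define R where "R = {z. poly p z = 0}"
  have R: "finite R" using poly_roots_finite[OF p(1)] by (simp add: R_def)
  define P where "P = (\<Prod>z\<in>R. (g - sm z 1) ^ order z p)"
  have "peval p g = peval (smult (lead_coeff p) (\<Prod>z\<in>R. [:-z, 1:] ^ order z p)) g"
    using complex_poly_decompose[of p] by (simp add: R_def)
  also have "\<dots> = sm (lead_coeff p) 1 * P"
    by (simp add: P_def peval_smult peval_prod peval_power peval_linear)
  finally have "\<theta> (sm (lead_coeff p) P) = 0"
    using p(2) by (metis mult_1_left sm_mult)
  then have "mscale (lead_coeff p) (\<theta> P) = 0" by (simp add: th_sm)
  then have "\<theta> (P * 1) = 0"
    using p(1) by (simp add: mscale_def vec_eq_iff)
  moreover have "\<forall>z\<in>R. 0 < order z p" using p(1) by (simp add: R_def order_gt_0_iff)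
  ultimately have kill: "\<theta> ((\<Prod>z\<in>R. g - sm z 1) * 1) = 0"
    unfolding P_def by (rule selfadjoint_annihilator_radical[OF g R, rotated])
  have "R \<noteq> {}"
  proof
    assume "R = {}"
    then have "(mat 1 :: complex^'n^'n) = 0" using kill th_one by simp
    then have "(mat 1 :: complex^'n^'n) $ i $ i = 0" for i by simp
    then show False by (simp add: mat_def)
  qed
  with R kill show ?thesis using that by simp
qed

lemma selfadjoint_spectral_decomposition:
  assumes g: "st g = g"
  obtains R e where "finite R" "\<And>v. (\<Sum>l\<in>R. \<theta> (e l) *v v) = v"
    "\<And>l v. l \<in> R \<Longrightarrow> \<theta> g *v (\<theta> (e l) *v v) = l *s (\<theta> (e l) *v v)"
proof -
  obtain R where R: "finite R" "R \<noteq> {}" and kill: "\<theta> (\<Prod>z\<in>R. g - sm z 1) = 0"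
    using selfadjoint_squarefree_annihilator[OF g] by blast
  define e where "e l = (\<Prod>z\<in>R-{l}. sm (1/(l - z)) 1 * (g - sm z 1))" for l
  have "(\<Sum>l\<in>R. e l) = peval (\<Sum>l\<in>R. \<Prod>z\<in>R-{l}. smult (1/(l - z)) [:-z, 1:]) g"
    by (simp only: e_def peval_sum peval_prod peval_smult peval_linear)
  also have "\<dots> = 1" by (simp only: lagrange_basis_sum_eq_1[OF R] peval_one)
  finally have sum_e: "(\<Sum>l\<in>R. e l) = 1" .
  have resolution: "(\<Sum>l\<in>R. \<theta> (e l) *v v) = v" for v
    using th_sum_apply[of e R v] by (simp add: sum_e th_one)
  have eigen: "\<theta> g *v (\<theta> (e l) *v v) = l *s (\<theta> (e l) *v v)" if "l \<in> R" for l v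
  proof -
    define c where "c = (\<Prod>z\<in>R-{l}. 1/(l - z))"
    have "e l = sm c 1 * (\<Prod>z\<in>R-{l}. g - sm z 1)"
      by (simp add: e_def c_def prod.distrib prod_sm_one)
    then have "(g - sm l 1) * e l = sm c 1 * ((g - sm l 1) * (\<Prod>z\<in>R-{l}. g - sm z 1))"
      by (simp add: mult.left_commute)
    also have "(g - sm l 1) * (\<Prod>z\<in>R-{l}. g - sm z 1) = (\<Prod>z\<in>R. g - sm z 1)"
      using R that by (simp add: prod.remove)
    finally have "\<theta> ((g - sm l 1) * e l) *v v = 0"
      using kill by (simp add: th_mult_apply th_scalar_apply)
    then show ?thesis by (simp add: left_diff_distrib th_diff_apply th_mult_apply th_scalar_apply)
  qed
  show ?thesis by (rule that[OF R(1) resolution eigen])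
qed


text \<open>\<open>h'\<close> is the real part of \<open>c exp(ith)\<close> with \<open>t = \<pi>/(\<mu> - \<nu>)\<close> and \<open>c = exp(-it\<mu>)\<close>, which acts
  as \<open>1\<close> on the \<open>\<mu>\<close>-eigenvectors and as \<open>exp(-i\<pi>) = -1\<close> on the \<open>\<nu>\<close>-eigenvectors of \<open>\<theta>(h)\<close>.\<close>

lemma selfadjoint_sign_separator:
  fixes \<mu> \<nu> :: real
  assumes h: "st h = h" and "\<mu> \<noteq> \<nu>"
  obtains h' where "st h' = h'" "norm h' \<le> 1"
    "\<And>x. \<theta> h *v x = complex_of_real \<mu> *s x \<Longrightarrow> \<theta> h' *v x = x"
    "\<And>x. \<theta> h *v x = complex_of_real \<nu> *s x \<Longrightarrow> \<theta> h' *v x = - x"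
proof -
  define t where "t = pi / (\<mu> - \<nu>)"
  define u where "u = exp (sm (\<i> * complex_of_real t) h)"
  define c where "c = exp (- (\<i> * complex_of_real t * complex_of_real \<mu>))"
  define h' where "h' = (1/2) *\<^sub>R (sm c u + sm (cnj c) (st u))"
  have "cmod c = 1"
    unfolding c_def using norm_exp_i_times[of "- (t * \<mu>)"] by simp
  have selfadjoint: "st h' = h'"
    by (simp add: h'_def st_scaleR st_add st_sm add.commute)
  have "norm (sm c u + sm (cnj c) (st u)) \<le> norm (sm c u) + norm (sm (cnj c) (st u))"
    by (rule norm_triangle_ineq)
  also have "\<dots> = 2"
    using norm_exp_imaginary_selfadjoint[OF h] \<open>cmod c = 1\<close> by (simp add: norm_sm u_def)
  finally have contraction: "norm h' \<le> 1" by (simp add: h'_def)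
  have act: "\<theta> h' *v x = ((1/2) * (c * exp (\<i> * complex_of_real t * e)
      + cnj c * exp (- (\<i> * complex_of_real t * e)))) *s x"
    if ev: "\<theta> h *v x = complex_of_real e *s x" for x e
  proof -
    have "\<theta> (sm (\<i> * complex_of_real t) h) *v x = (\<i> * complex_of_real t * complex_of_real e) *s x"
      by (simp add: th_sm_apply ev vector_smult_assoc)
    then have u: "\<theta> u *v x = exp (\<i> * complex_of_real t * complex_of_real e) *s x"
      unfolding u_def by (rule th_exp_eigen)
    have "\<theta> (sm (- (\<i> * complex_of_real t)) h) *v x
        = (- (\<i> * complex_of_real t * complex_of_real e)) *s x"
      by (simp add: th_sm_apply ev vector_smult_assoc)
    then have st_u: "\<theta> (st u) *v x = exp (- (\<i> * complex_of_real t * complex_of_real e)) *s x"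
      unfolding u_def st_exp_imaginary_selfadjoint[OF h] by (rule th_exp_eigen)
    show ?thesis
      by (simp add: h'_def th_scaleR_apply th_add_apply th_sm_apply u st_u vector_smult_assoc
          vector_sadd_rdistrib algebra_simps)
  qed
  have cnj_c: "cnj c = exp (\<i> * complex_of_real t * complex_of_real \<mu>)"
    by (simp add: c_def exp_cnj)
  have plus: "\<theta> h' *v x = x" if "\<theta> h *v x = complex_of_real \<mu> *s x" for x
  proof -
    have "c * exp (\<i> * complex_of_real t * complex_of_real \<mu>) = 1"
      by (simp add: c_def flip: exp_add)
    moreover have "cnj c * exp (- (\<i> * complex_of_real t * complex_of_real \<mu>)) = 1"
      by (simp add: cnj_c flip: exp_add)
    ultimately show ?thesis using act[OF that] by simp
  qed
  have minus: "\<theta> h' *v x = - x" if "\<theta> h *v x = complex_of_real \<nu> *s x" for x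
  proof -
    have tt: "t * (\<mu> - \<nu>) = pi" using \<open>\<mu> \<noteq> \<nu>\<close> by (simp add: t_def)
    have "c * exp (\<i> * complex_of_real t * complex_of_real \<nu>)
        = exp (- (\<i> * complex_of_real (t * (\<mu> - \<nu>))))"
      by (simp add: c_def algebra_simps flip: exp_add)
    also have "\<dots> = -1" by (simp add: tt exp_minus)
    finally have "c * exp (\<i> * complex_of_real t * complex_of_real \<nu>) = -1" .
    moreover have "cnj c * exp (- (\<i> * complex_of_real t * complex_of_real \<nu>))
        = exp (\<i> * complex_of_real (t * (\<mu> - \<nu>)))"
      by (simp add: cnj_c algebra_simps flip: exp_add)
    moreover have "exp (\<i> * complex_of_real (t * (\<mu> - \<nu>))) = -1" by (simp add: tt)
    ultimately show ?thesis using act[OF that] by (simp add: vector_smult_lneg)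
  qed
  show ?thesis by (rule that[OF selfadjoint contraction plus minus])
qed

lemma selfadjoint_form_symmetric:
  assumes h: "st h = h"
    and orth: "\<And>x y l m. \<theta> h *v x = l *s x \<Longrightarrow> \<theta> h *v y = m *s y \<Longrightarrow> l \<noteq> m \<Longrightarrow> cinner x y = 0"
  shows "cinner (\<theta> h *v x) y = cinner x (\<theta> h *v y)"
proof -
  obtain R e where R: "finite R" and resolution: "\<And>v. (\<Sum>l\<in>R. \<theta> (e l) *v v) = v"
    and eigen: "\<And>l v. l \<in> R \<Longrightarrow> \<theta> h *v (\<theta> (e l) *v v) = l *s (\<theta> (e l) *v v)"
    using selfadjoint_spectral_decomposition[OF h] by blast
  have h_apply: "\<theta> h *v v = (\<Sum>l\<in>R. l *s (\<theta> (e l) *v v))" for v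
    using resolution eigen by (rule matrix_vector_mult_eigen_sum)
  have summand: "l * cinner (\<theta> (e l) *v x) (\<theta> (e m) *v y) = cnj m * cinner (\<theta> (e l) *v x) (\<theta> (e m) *v y)"
    if "l \<in> R" "m \<in> R" for l m
  proof (cases "\<theta> (e m) *v y = 0")
    case False
    then have "cnj m = m"
      using eigenvalue_selfadjoint_real[OF h eigen[OF \<open>m \<in> R\<close>]] by (simp add: complex_eq_iff)
    moreover have "cinner (\<theta> (e l) *v x) (\<theta> (e m) *v y) = 0" if "l \<noteq> m"
      using orth[OF eigen[OF \<open>l \<in> R\<close>] eigen[OF \<open>m \<in> R\<close>] that] .
    ultimately show ?thesis by (cases "l = m") auto
  qed simp
  have "cinner (\<theta> h *v x) y = cinner (\<Sum>l\<in>R. l *s (\<theta> (e l) *v x)) (\<Sum>m\<in>R. \<theta> (e m) *v y)"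
    by (simp only: h_apply resolution)
  also have "\<dots> = (\<Sum>l\<in>R. \<Sum>m\<in>R. l * cinner (\<theta> (e l) *v x) (\<theta> (e m) *v y))"
    by (simp add: cinner_sum_left cinner_sum_right cinner_scale_left) (rule sum.swap)
  also have "\<dots> = (\<Sum>l\<in>R. \<Sum>m\<in>R. cnj m * cinner (\<theta> (e l) *v x) (\<theta> (e m) *v y))"
    by (intro sum.cong refl summand)
  also have "\<dots> = cinner (\<Sum>l\<in>R. \<theta> (e l) *v x) (\<Sum>m\<in>R. m *s (\<theta> (e m) *v y))"
    by (simp add: cinner_sum_left cinner_sum_right cinner_scale_right sum_distrib_left) (rule sum.swap)
  also have "\<dots> = cinner x (\<theta> h *v y)"
    by (simp only: h_apply resolution)
  finally show ?thesis .
qed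

lemma hermitian_if_eigenvectors_orthogonal:
  assumes h: "st h = h"
    and orth: "\<And>x y l m. \<theta> h *v x = l *s x \<Longrightarrow> \<theta> h *v y = m *s y \<Longrightarrow> l \<noteq> m \<Longrightarrow> cinner x y = 0"
  shows "adj (\<theta> h) = \<theta> h"
proof -
  have sym: "cinner (\<theta> h *v u) w = cinner u (\<theta> h *v w)" for u w
    using h orth by (rule selfadjoint_form_symmetric)
  have "adj (\<theta> h) *v y = \<theta> h *v y" for y
  proof (rule cinner_eqI)
    fix x
    have "cinner (adj (\<theta> h) *v y) x = cnj (cinner (\<theta> h *v x) y)"
      by (simp add: cinner_adj cnj_cinner)
    also have "\<dots> = cnj (cinner x (\<theta> h *v y))"
      by (simp only: sym)
    also have "\<dots> = cinner (\<theta> h *v y) x"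
      by (rule cnj_cinner)
    finally show "cinner (adj (\<theta> h) *v y) x = cinner (\<theta> h *v y) x" .
  qed
  then show ?thesis by (simp add: matrix_eq)
qed

lemma th_st_if_hermitian:
  assumes herm: "\<And>h. st h = h \<Longrightarrow> adj (\<theta> h) = \<theta> h"
  shows "\<theta> (st f) = adj (\<theta> f)"
proof -
  obtain f1 f2 where f: "st f1 = f1" "st f2 = f2" "f = f1 + sm \<i> f2"
    using selfadjoint_decomposition by blast
  have "st f = f1 + sm (- \<i>) f2" by (simp add: f st_add st_sm)
  then show ?thesis
    using herm[OF f(1)] herm[OF f(2)] by (simp add: f(3) th_add th_sm adj_add adj_mscale)
qed

lemma norm_hermitian_apply_le:
  assumes k: "st k = k" and herm: "adj (\<theta> k) = \<theta> k"
  shows "norm (\<theta> k *v v) \<le> norm k * norm v"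
proof -
  obtain R e where R: "finite R" and resolution: "\<And>v. (\<Sum>l\<in>R. \<theta> (e l) *v v) = v"
    and eigen: "\<And>l v. l \<in> R \<Longrightarrow> \<theta> k *v (\<theta> (e l) *v v) = l *s (\<theta> (e l) *v v)"
    using selfadjoint_spectral_decomposition[OF k] by blast
  have orth: "cinner (\<theta> (e l) *v v) (\<theta> (e m) *v v) = 0" if "l \<in> R" "m \<in> R" "l \<noteq> m" for l m
    using hermitian_eigenvectors_orthogonal[OF herm eigen[OF that(1)] eigen[OF that(2)] that(3)] .
  have k_apply: "\<theta> k *v v = (\<Sum>l\<in>R. l *s (\<theta> (e l) *v v))"
    using resolution eigen by (rule matrix_vector_mult_eigen_sum)
  have "(norm (\<theta> k *v v))\<^sup>2 = (\<Sum>l\<in>R. (norm (l *s (\<theta> (e l) *v v)))\<^sup>2)"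
    unfolding k_apply
    by (rule norm_sum_orthogonal_power2[OF R]) (simp add: cinner_scale_left cinner_scale_right orth)
  also have "\<dots> \<le> (\<Sum>l\<in>R. (norm k)\<^sup>2 * (norm (\<theta> (e l) *v v))\<^sup>2)"
  proof (intro sum_mono)
    fix l assume "l \<in> R"
    show "(norm (l *s (\<theta> (e l) *v v)))\<^sup>2 \<le> (norm k)\<^sup>2 * (norm (\<theta> (e l) *v v))\<^sup>2"
    proof (cases "\<theta> (e l) *v v = 0")
      case False
      then have "cmod l \<le> norm k" using eigenvalue_norm_le[OF eigen[OF \<open>l \<in> R\<close>]] by blast
      then show ?thesis by (simp add: norm_vector_smult power_mult_distrib mult_right_mono power_mono)
    qed simp
  qed
  also have "\<dots> = (norm k)\<^sup>2 * (norm v)\<^sup>2"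
    using norm_sum_orthogonal_power2[OF R, of "\<lambda>l. \<theta> (e l) *v v"] orth resolution
    by (simp add: sum_distrib_left)
  finally have "(norm (\<theta> k *v v))\<^sup>2 \<le> (norm k * norm v)\<^sup>2" by (simp add: power_mult_distrib)
  then show ?thesis by (rule power2_le_imp_le) simp
qed

lemma star_hom_contractive:
  assumes star: "\<And>f. \<theta> (st f) = adj (\<theta> f)"
  shows "norm (\<theta> f *v v) \<le> norm f * norm v"
proof -
  have k: "st (st f * f) = st f * f" by (simp add: st_mult mult.commute)
  have "complex_of_real ((norm (\<theta> f *v v))\<^sup>2) = cinner (\<theta> f *v v) (\<theta> f *v v)"
    by (simp add: cinner_self)
  also have "\<dots> = cinner v (\<theta> (st f * f) *v v)"
    by (simp add: cinner_adj th_mult_apply star)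
  finally have "(norm (\<theta> f *v v))\<^sup>2 = Re (cinner v (\<theta> (st f * f) *v v))"
    by (metis Re_complex_of_real)
  also have "\<dots> \<le> cmod (cinner v (\<theta> (st f * f) *v v))" by (rule complex_Re_le_cmod)
  also have "\<dots> \<le> norm v * norm (\<theta> (st f * f) *v v)" by (rule cinner_Cauchy_Schwarz)
  also have "\<dots> \<le> norm v * (norm (st f * f) * norm v)"
    using norm_hermitian_apply_le[OF k] k star[of "st f * f"] by (simp add: mult_left_mono)
  also have "\<dots> = (norm f * norm v)\<^sup>2" by (simp add: norm_st_mult_self power2_eq_square)
  finally show ?thesis by (rule power2_le_imp_le) simp
qed

lemma star_hom_norm_Sup:
  assumes star: "\<And>f. \<theta> (st f) = adj (\<theta> f)"
  shows "Sup {mnorm (\<theta> f) | f. norm f \<le> 1} = 1"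
proof (rule cSup_eq_maximum)
  have "mnorm (\<theta> 1) = 1" by (simp add: mnorm_def th_one onorm_id)
  then show "1 \<in> {mnorm (\<theta> f) | f. norm f \<le> 1}" by force
next
  fix x assume "x \<in> {mnorm (\<theta> f) | f. norm f \<le> 1}"
  then obtain f where "x = mnorm (\<theta> f)" "norm f \<le> 1" by blast
  moreover have "mnorm (\<theta> f) \<le> norm f"
    unfolding mnorm_def by (rule onorm_le) (rule star_hom_contractive[OF star])
  ultimately show "x \<le> 1" by simp
qed

end

section \<open>The twisted map \<open>\<theta>\<^sub>\<alpha>\<close>\<close>

locale twisted_contractive_rep = cstar_matrix_rep +
  fixes \<alpha> :: "'a \<Rightarrow> 'a"
  assumes al_add: "\<And>x y. \<alpha> (x + y) = \<alpha> x + \<alpha> y"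
    and al_sm: "\<And>c x. \<alpha> (sm c x) = sm (cnj c) (\<alpha> x)"
    and al_contr: "\<And>f. norm (\<alpha> f) \<le> norm f"
    and al_one: "\<alpha> 1 = 1"
    and th_al_norm: "\<And>f. mnorm (mscale (1/2) (\<theta> f + adj (\<theta> (\<alpha> f)))) \<le> norm f"
begin

definition th_al where
  "th_al f = mscale (1/2) (\<theta> f + adj (\<theta> (\<alpha> f)))"

lemma th_al_apply: "th_al f *v x = (1/2) *s (\<theta> f *v x + adj (\<theta> (\<alpha> f)) *v x)"
  by (simp add: th_al_def mscale_matrix_vector_mult matrix_vector_mult_add_rdistrib)

lemma th_al_form: "cinner (th_al f *v x) x = (1/2) * (cinner (\<theta> f *v x) x + cinner x (\<theta> (\<alpha> f) *v x))"
  by (simp add: th_al_apply cinner_scale_left cinner_add_left cinner_adj)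

lemma th_al_form_bound: "cmod (cinner (th_al f *v x) x) \<le> norm f * (norm x)\<^sup>2"
proof -
  have "mnorm (th_al f) \<le> norm f" unfolding th_al_def by (rule th_al_norm)
  then show ?thesis
    using cinner_matrix_vector_mult_le_mnorm[of "th_al f" x]
    by (meson mult_right_mono order_trans zero_le_power2)
qed

lemma th_al_add_apply: "th_al (f + g) *v x = th_al f *v x + th_al g *v x"
  by (simp add: th_al_apply th_add al_add adj_add matrix_vector_mult_add_rdistrib vector_sadd_rdistrib
      vector_add_ldistrib algebra_simps)

lemma th_al_scalar_apply: "th_al (sm c 1) *v x = c *s x"
proof -
  have "adj (\<theta> (\<alpha> (sm c 1))) *v x = c *s x"
    by (simp add: al_sm al_one th_sm th_one adj_mscale adj_mat_1 mscale_matrix_vector_mult)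
  then show ?thesis
    by (simp add: th_al_apply th_scalar_apply vector_smult_assoc flip: vector_sadd_rdistrib)
qed

text \<open>As for \<open>eigenvalue_selfadjoint_real\<close>, with the vector states of \<open>\<theta>\<^sub>\<alpha>\<close> in place of
  eigenvalues.\<close>

lemma th_al_form_selfadjoint_real:
  assumes h: "st h = h"
  shows "Im (cinner (th_al h *v x) x) = 0"
proof (cases "x = 0")
  case False
  show ?thesis
  proof (rule quadratic_growth_imp_zero[where b="(norm x)\<^sup>2" and N="(norm h)\<^sup>2"])
    fix t :: real
    define z where "z = h + sm (\<i> * complex_of_real t) 1"
    define q where "q = cinner (th_al h *v x) x"
    have "cinner (th_al z *v x) x = q + \<i> * complex_of_real (t * (norm x)\<^sup>2)"
      by (simp add: z_def q_def th_al_add_apply th_al_scalar_apply cinner_add_left cinner_scale_left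
          cinner_self del: of_real_power)
    then have "cmod (q + \<i> * complex_of_real (t * (norm x)\<^sup>2)) \<le> norm z * (norm x)\<^sup>2"
      using th_al_form_bound[of z x] by simp
    then have "(cmod (q + \<i> * complex_of_real (t * (norm x)\<^sup>2)))\<^sup>2 \<le> (norm z)\<^sup>2 * ((norm x)\<^sup>2)\<^sup>2"
      by (metis norm_ge_zero power_mono power_mult_distrib)
    also have "\<dots> \<le> ((norm h)\<^sup>2 + t\<^sup>2) * ((norm x)\<^sup>2)\<^sup>2"
      unfolding z_def by (intro mult_right_mono norm_selfadjoint_plus_imaginary[OF h]) simp
    finally have "(cmod (q + \<i> * complex_of_real (t * (norm x)\<^sup>2)))\<^sup>2 \<le> ((norm h)\<^sup>2 + t\<^sup>2) * ((norm x)\<^sup>2)\<^sup>2" .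
    moreover have "(Im q + t * (norm x)\<^sup>2)\<^sup>2 \<le> (cmod (q + \<i> * complex_of_real (t * (norm x)\<^sup>2)))\<^sup>2"
      by (simp add: cmod_power2 del: of_real_power)
    ultimately show "(Im (cinner (th_al h *v x) x) + t * (norm x)\<^sup>2)\<^sup>2
        \<le> (norm h)\<^sup>2 * ((norm x)\<^sup>2)\<^sup>2 + t\<^sup>2 * ((norm x)\<^sup>2)\<^sup>2"
      unfolding q_def by (simp add: algebra_simps)
  qed (use False in simp)
qed simp

lemma al_eigenvalue_real:
  assumes h: "st h = h" and s: "\<theta> h *v a = s *s a" and c: "\<theta> (\<alpha> h) *v a = c *s a" and "a \<noteq> 0"
  shows "Im c = 0"
proof -
  have "Im s = 0" using eigenvalue_selfadjoint_real[OF h s \<open>a \<noteq> 0\<close>] .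
  have "2 * cinner (th_al h *v a) a = (s + cnj c) * complex_of_real ((norm a)\<^sup>2)"
    by (simp add: th_al_form s c cinner_scale_left cinner_scale_right cinner_self algebra_simps
        del: of_real_power)
  moreover have "Im (2 * cinner (th_al h *v a) a) = 0"
    using th_al_form_selfadjoint_real[OF h] by simp
  ultimately show ?thesis using \<open>Im s = 0\<close> \<open>a \<noteq> 0\<close> by simp
qed

lemma th_al_form_pair:
  assumes a: "\<theta> h *v a = a" "\<theta> (\<alpha> h) *v a = ca *s a"
    and b: "\<theta> h *v b = - b" "\<theta> (\<alpha> h) *v b = cb *s b"
  shows "2 * cinner (th_al h *v (a + s *s b)) (a + s *s b) =
     (1 + cnj ca) * cinner a a + s * cnj s * (cnj cb - 1) * cinner b b
     + cnj s * cinner a b * (1 + cnj cb) + s * cnj (cinner a b) * (cnj ca - 1)"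
proof -
  have h_apply: "\<theta> h *v (a + s *s b) = a - s *s b"
    by (simp add: matrix_vector_right_distrib vector_scalar_commute a b vector_smult_rneg)
  have al_h_apply: "\<theta> (\<alpha> h) *v (a + s *s b) = ca *s a + (s * cb) *s b"
    by (simp add: matrix_vector_right_distrib vector_scalar_commute a b vector_smult_assoc)
  have "cinner b a = cnj (cinner a b)" by (simp add: cnj_cinner)
  then show ?thesis
    unfolding th_al_form h_apply al_h_apply
    by (simp add: cinner_add_left cinner_add_right cinner_diff_left cinner_scale_left
        cinner_scale_right algebra_simps)
qed

text \<open>Evaluating the real, norm-bounded form \<open>\<langle>\<theta>\<^sub>\<alpha>(h) x, x\<rangle>\<close> at \<open>x = a + i\<langle>a, b\<rangle> b\<close>.\<close>

lemma al_sign_eigenvalues: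
  assumes h: "st h = h" "norm h \<le> 1"
    and a: "\<theta> h *v a = a" "\<theta> (\<alpha> h) *v a = ca *s a"
    and b: "\<theta> h *v b = - b" "\<theta> (\<alpha> h) *v b = cb *s b"
    and "cinner a b \<noteq> 0"
  shows "ca = 1" and "cb = -1"
proof -
  have "a \<noteq> 0" "b \<noteq> 0" using \<open>cinner a b \<noteq> 0\<close> by auto
  have "Im ca = 0" using al_eigenvalue_real[OF h(1) _ a(2) \<open>a \<noteq> 0\<close>, of 1] a(1) by simp
  have "Im cb = 0"
    using al_eigenvalue_real[OF h(1) _ b(2) \<open>b \<noteq> 0\<close>, of "-1"] b(1) by (simp add: vector_smult_lneg)
  have "cmod ca \<le> 1" "cmod cb \<le> 1"
    using eigenvalue_norm_le[OF a(2) \<open>a \<noteq> 0\<close>] eigenvalue_norm_le[OF b(2) \<open>b \<noteq> 0\<close>] al_contr[of h] h(2)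
    by linarith+
  define \<rho> \<sigma> where "\<rho> = Re ca" and "\<sigma> = Re cb"
  have ca: "ca = complex_of_real \<rho>" and cb: "cb = complex_of_real \<sigma>"
    using \<open>Im ca = 0\<close> \<open>Im cb = 0\<close> by (simp_all add: \<rho>_def \<sigma>_def complex_eq_iff)
  have "\<bar>\<rho>\<bar> \<le> 1" "\<bar>\<sigma>\<bar> \<le> 1"
    using \<open>cmod ca \<le> 1\<close> \<open>cmod cb \<le> 1\<close> by (simp_all add: ca cb)
  define z where "z = cinner a b"
  define na nb nz where "na = (norm a)\<^sup>2" and "nb = (norm b)\<^sup>2" and "nz = (cmod z)\<^sup>2"
  have "nz > 0" using \<open>cinner a b \<noteq> 0\<close> by (simp add: nz_def z_def)
  have aa: "cinner a a = complex_of_real na" and bb: "cinner b b = complex_of_real nb"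
    by (simp_all add: na_def nb_def cinner_self)
  have zz: "z * cnj z = complex_of_real nz" by (simp add: nz_def complex_mult_cnj cmod_power2)
  have "Im (2 * cinner (th_al h *v (a + (\<i> * z) *s b)) (a + (\<i> * z) *s b)) = (\<rho> - \<sigma> - 2) * nz"
    unfolding th_al_form_pair[OF a b] by (simp add: ca cb aa bb z_def [symmetric] algebra_simps zz)
  moreover have "Im (2 * cinner (th_al h *v x) x) = 0" for x
    using th_al_form_selfadjoint_real[OF h(1)] by simp
  ultimately have "\<rho> - \<sigma> = 2" using \<open>nz > 0\<close> by simp
  then have "\<rho> = 1" "\<sigma> = -1" using \<open>\<bar>\<rho>\<bar> \<le> 1\<close> \<open>\<bar>\<sigma>\<bar> \<le> 1\<close> by (auto simp: abs_le_iff)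
  then show "ca = 1" "cb = -1" by (simp_all add: ca cb)
qed

text \<open>Once \<open>\<theta>(\<alpha>(h))\<close> acts as \<open>\<theta>(h)\<close> on \<open>a\<close> and \<open>b\<close>, the form \<open>\<langle>\<theta>\<^sub>\<alpha>(h) x, x\<rangle>\<close> at
  \<open>x = a - t\<langle>a, b\<rangle> b\<close> drops below \<open>-\<parallel>x\<parallel>\<^sup>2\<close> for suitable \<open>t\<close> unless \<open>\<langle>a, b\<rangle> = 0\<close>.\<close>

lemma sign_eigenvectors_orthogonal:
  assumes h: "st h = h" "norm h \<le> 1"
    and a: "\<theta> h *v a = a" "\<theta> (\<alpha> h) *v a = ca *s a"
    and b: "\<theta> h *v b = - b" "\<theta> (\<alpha> h) *v b = cb *s b"
  shows "cinner a b = 0"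
proof (rule ccontr)
  assume "cinner a b \<noteq> 0"
  then have ca: "ca = 1" and cb: "cb = -1" using al_sign_eigenvalues[OF h a b] by auto
  define z where "z = cinner a b"
  define na nb nz where "na = (norm a)\<^sup>2" and "nb = (norm b)\<^sup>2" and "nz = (cmod z)\<^sup>2"
  have "nz > 0" using \<open>cinner a b \<noteq> 0\<close> by (simp add: nz_def z_def)
  have aa: "cinner a a = complex_of_real na" and bb: "cinner b b = complex_of_real nb"
    by (simp_all add: na_def nb_def cinner_self)
  have ba: "cinner b a = cnj z" by (simp add: z_def cnj_cinner)
  have zz: "z * cnj z = complex_of_real nz" by (simp add: nz_def complex_mult_cnj cmod_power2)
  have zz': "z * (cnj z * w) = complex_of_real nz * w" for w
    by (simp add: mult.assoc [symmetric] zz)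
  define t where "t = (na + 1) / nz"
  define x where "x = a + (- (complex_of_real t * z)) *s b"
  have form: "2 * cinner (th_al h *v x) x = complex_of_real (2 * na - 2 * t\<^sup>2 * nz * nb)"
    unfolding x_def th_al_form_pair[OF a b]
    by (simp add: ca cb aa bb z_def [symmetric] algebra_simps zz power2_eq_square)
  have "complex_of_real ((norm x)\<^sup>2) = cinner x x" by (simp add: cinner_self)
  also have "\<dots> = complex_of_real (na - 2 * t * nz + t\<^sup>2 * nz * nb)"
    unfolding x_def
    by (simp add: cinner_add_left cinner_add_right cinner_diff_left cinner_diff_right
        cinner_scale_left cinner_scale_right aa bb z_def [symmetric] ba algebra_simps zz zz'
        power2_eq_square)
  finally have norm_x: "(norm x)\<^sup>2 = na - 2 * t * nz + t\<^sup>2 * nz * nb" by (simp only: of_real_eq_iff)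
  have "cmod (cinner (th_al h *v x) x) \<le> (norm x)\<^sup>2"
    using th_al_form_bound[of h x] h(2)
    by (meson mult_right_mono order_trans zero_le_power2 mult_left_le_one_le norm_ge_zero)
  then have "- (norm x)\<^sup>2 \<le> Re (cinner (th_al h *v x) x)"
    using abs_Re_le_cmod[of "cinner (th_al h *v x) x"] by linarith
  moreover have "Re (cinner (th_al h *v x) x) = na - t\<^sup>2 * nz * nb"
    using arg_cong[OF form, of Re] by simp
  ultimately have "0 \<le> 2 * na - 2 * t * nz" using norm_x by simp
  moreover have "t * nz = na + 1" using \<open>nz > 0\<close> by (simp add: t_def)
  ultimately show False by simp
qed

text \<open>Splitting \<open>a\<close> and \<open>b\<close> into joint eigenvectors of \<open>\<theta>(g\<^sub>1)\<close> and \<open>\<theta>(g\<^sub>2)\<close>, where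
  \<open>\<alpha>(h') = g\<^sub>1 + i g\<^sub>2\<close>, makes \<open>\<theta>(\<alpha>(h'))\<close> act by scalars on the pieces.\<close>

lemma real_eigenvectors_orthogonal:
  fixes \<mu> \<nu> :: real
  assumes h: "st h = h" and a: "\<theta> h *v a = complex_of_real \<mu> *s a"
    and b: "\<theta> h *v b = complex_of_real \<nu> *s b" and "\<mu> \<noteq> \<nu>"
  shows "cinner a b = 0"
proof -
  obtain h' where h': "st h' = h'" "norm h' \<le> 1"
    and plus: "\<And>x. \<theta> h *v x = complex_of_real \<mu> *s x \<Longrightarrow> \<theta> h' *v x = x"
    and minus: "\<And>x. \<theta> h *v x = complex_of_real \<nu> *s x \<Longrightarrow> \<theta> h' *v x = - x"
    using selfadjoint_sign_separator[OF h \<open>\<mu> \<noteq> \<nu>\<close>] by blast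
  obtain g1 g2 where g: "st g1 = g1" "st g2 = g2" "\<alpha> h' = g1 + sm \<i> g2"
    using selfadjoint_decomposition by blast
  obtain R1 e1 where "finite R1" and res1: "\<And>v. (\<Sum>l\<in>R1. \<theta> (e1 l) *v v) = v"
    and eig1: "\<And>l v. l \<in> R1 \<Longrightarrow> \<theta> g1 *v (\<theta> (e1 l) *v v) = l *s (\<theta> (e1 l) *v v)"
    using selfadjoint_spectral_decomposition[OF g(1)] by blast
  obtain R2 e2 where "finite R2" and res2: "\<And>v. (\<Sum>l\<in>R2. \<theta> (e2 l) *v v) = v"
    and eig2: "\<And>l v. l \<in> R2 \<Longrightarrow> \<theta> g2 *v (\<theta> (e2 l) *v v) = l *s (\<theta> (e2 l) *v v)"
    using selfadjoint_spectral_decomposition[OF g(2)] by blast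
  define P where "P l1 l2 x = \<theta> (e2 l2) *v (\<theta> (e1 l1) *v x)" for l1 l2 x
  have P_sum: "(\<Sum>l1\<in>R1. \<Sum>l2\<in>R2. P l1 l2 x) = x" for x
    using res1 res2 by (simp add: P_def)
  have P_al: "\<theta> (\<alpha> h') *v P l1 l2 x = (l1 + \<i> * l2) *s P l1 l2 x"
    if "l1 \<in> R1" "l2 \<in> R2" for l1 l2 x
  proof -
    have "\<theta> g1 *v P l1 l2 x = l1 *s P l1 l2 x"
      using eig1[OF that(1)] by (simp add: P_def th_apply_commute[of g1 "e2 l2"] vector_scalar_commute)
    moreover have "\<theta> g2 *v P l1 l2 x = l2 *s P l1 l2 x"
      using eig2[OF that(2)] by (simp add: P_def)
    ultimately show ?thesis
      by (simp add: g(3) th_add_apply th_sm_apply vector_sadd_rdistrib vector_smult_assoc)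
  qed
  have P_h': "\<theta> h' *v P l1 l2 x = P l1 l2 (\<theta> h' *v x)" for l1 l2 x
    by (simp add: P_def th_apply_commute[of h' "e2 l2"] th_apply_commute[of h' "e1 l1"])
  have P_neg: "P l1 l2 (- x) = - P l1 l2 x" for l1 l2 x
    by (simp add: P_def matrix_vector_mult_diff_distrib[of _ 0, simplified])
  have "cinner (P l1 l2 a) (P m1 m2 b) = 0"
    if "l1 \<in> R1" "l2 \<in> R2" "m1 \<in> R1" "m2 \<in> R2" for l1 l2 m1 m2
    using sign_eigenvectors_orthogonal[OF h', of "P l1 l2 a" "l1 + \<i> * l2" "P m1 m2 b" "m1 + \<i> * m2"]
      P_al[OF that(1,2)] P_al[OF that(3,4)] P_h' plus[OF a] minus[OF b] P_neg by simp
  then have "cinner (\<Sum>l1\<in>R1. \<Sum>l2\<in>R2. P l1 l2 a) (\<Sum>m1\<in>R1. \<Sum>m2\<in>R2. P m1 m2 b) = 0"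
    by (simp add: cinner_sum_left cinner_sum_right)
  then show ?thesis by (simp only: P_sum)
qed

lemma eigenvectors_orthogonal:
  assumes h: "st h = h" and x: "\<theta> h *v x = l *s x" and y: "\<theta> h *v y = m *s y" and "l \<noteq> m"
  shows "cinner x y = 0"
proof (cases "x = 0 \<or> y = 0")
  case False
  then have "Im l = 0" "Im m = 0"
    using eigenvalue_selfadjoint_real[OF h x] eigenvalue_selfadjoint_real[OF h y] by auto
  then have l: "complex_of_real (Re l) = l" and m: "complex_of_real (Re m) = m"
    by (simp_all add: complex_eq_iff)
  then have "Re l \<noteq> Re m" using \<open>l \<noteq> m\<close> by metis
  with x y show ?thesis
    by (intro real_eigenvectors_orthogonal[OF h]) (simp_all only: l m)
qed auto

lemma th_st: "\<theta> (st f) = adj (\<theta> f)"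
proof (rule th_st_if_hermitian)
  fix h assume "st h = h"
  then show "adj (\<theta> h) = \<theta> h"
    using eigenvectors_orthogonal[OF \<open>st h = h\<close>] by (rule hermitian_if_eigenvectors_orthogonal)
qed

end

theorem theorem1p5:
  fixes sm :: "complex \<Rightarrow> 'a::{real_normed_algebra_1,comm_ring_1,banach} \<Rightarrow> 'a"
    and st :: "'a \<Rightarrow> 'a"
    and \<theta> :: "'a \<Rightarrow> complex^'n::finite^'n"
    and \<alpha> :: "'a \<Rightarrow> 'a"
  assumes A: "comm_unital_cstar sm st"
    and th_add: "\<And>x y. \<theta> (x + y) = \<theta> x + \<theta> y"
    and th_sm: "\<And>c x. \<theta> (sm c x) = mscale c (\<theta> x)"
    and th_mult: "\<And>x y. \<theta> (x * y) = \<theta> x ** \<theta> y"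
    and th_one: "\<theta> 1 = mat 1"
    and th_cont: "continuous_on UNIV \<theta>"
    and al_add: "\<And>x y. \<alpha> (x + y) = \<alpha> x + \<alpha> y"
    and al_sm: "\<And>c x. \<alpha> (sm c x) = sm (cnj c) (\<alpha> x)"
    and al_contr: "\<And>f. norm (\<alpha> f) \<le> norm f"
    and al_one: "\<alpha> 1 = 1"
    and th_al_norm: "\<And>f. mnorm (mscale (1/2) (\<theta> f + adj (\<theta> (\<alpha> f)))) \<le> norm f"
  shows "(\<forall>f. \<theta> (st f) = adj (\<theta> f)) \<and> Sup {mnorm (\<theta> f) | f. norm f \<le> 1} = 1"
proof -
  interpret twisted_contractive_rep sm st \<theta> \<alpha>
    by unfold_locales (fact assms)+
  show ?thesis using th_st star_hom_norm_Sup[OF th_st] by blast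
qed

end
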